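(* Let $P$ and $W$ be finite point sets in the plane with $P\cup W$ in general position, let $p\in P$ with $W\setminus\{p\}\neq\varnothing$, and let $w_1,\dots,w_t$ be the neighbors of $p$ in the Delaunay triangulation $\mathrm{DT}(W\cup\{p\})$ listed in counterclockwise radial order around $p$ (indices taken cyclically, $w_{t+1}=w_1$). Let $q\in P\setminus\{p\}$ be a point whose direction from $p$ lies strictly between the directions of $w_i$ and $w_{i+1}$ in the counterclockwise sector from $w_i$ to $w_{i+1}$, and let $\measuredangle w_ipw_{i+1}$ denote the counterclockwise angle of that sector. If $\measuredangle w_ipw_{i+1}\ge\pi$, then $p$ and $q$ are adjacent in $\mathrm{DG}^-(P,W)$. If $\measuredangle w_ipw_{i+1}<\pi$, then $p$ and $q$ are adjacent in $\mathrm{DG}^-(P,W)$ if and only if $q$ lies in the interior of the circle through $p$, $w_i$ and $w_{i+1}$.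
   Context: Let $P$ (the vertices) and $W$ (the witnesses) be finite point sets in $\mathbb{R}^2$; $P$ and $W$ may share points. The witness Delaunay graph $\mathrm{DG}^-(P,W)$ is the graph with vertex set $P$ in which distinct $x,y\in P$ are adjacent if and only if there is an open disk containing no point of $W$ whose bounding circle passes through $x$ and $y$. General position of $P\cup W$ means that no three distinct points of $P\cup W$ are collinear and no four distinct points of $P\cup W$ are concyclic. For a finite point set $Q$ in general position, $\mathrm{DT}(Q)$ is its Delaunay triangulation: distinct $a,b\in Q$ are joined iff some open disk whose boundary passes through $a$ and $b$ contains no point of $Q$. *)

theory Defs
  imports "HOL-Analysis.Analysis"
begin

definition concyclic4 :: "complex \<Rightarrow> complex \<Rightarrow> complex \<Rightarrow> complex \<Rightarrow> bool" where
  "concyclic4 a b c d \<longleftrightarrow>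
     (\<exists>z r. dist z a = r \<and> dist z b = r \<and> dist z c = r \<and> dist z d = r)"

definition gen_pos :: "complex set \<Rightarrow> bool" where
  "gen_pos S \<longleftrightarrow>
     (\<forall>a\<in>S. \<forall>b\<in>S. \<forall>c\<in>S. distinct [a,b,c] \<longrightarrow> \<not> collinear {a,b,c}) \<and>
     (\<forall>a\<in>S. \<forall>b\<in>S. \<forall>c\<in>S. \<forall>d\<in>S. distinct [a,b,c,d] \<longrightarrow> \<not> concyclic4 a b c d)"

definition DGminus_adj :: "complex set \<Rightarrow> complex set \<Rightarrow> complex \<Rightarrow> complex \<Rightarrow> bool" where
  "DGminus_adj P W x y \<longleftrightarrow> x \<in> P \<and> y \<in> P \<and> x \<noteq> y \<and>
     (\<exists>z r. dist z x = r \<and> dist z y = r \<and> ball z r \<inter> W = {})"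

definition DT_adj :: "complex set \<Rightarrow> complex \<Rightarrow> complex \<Rightarrow> bool" where
  "DT_adj Q a b \<longleftrightarrow> a \<in> Q \<and> b \<in> Q \<and> a \<noteq> b \<and>
     (\<exists>z r. dist z a = r \<and> dist z b = r \<and> ball z r \<inter> Q = {})"

text \<open>Counterclockwise angle at p from the direction of a to the direction of b,
  taking values in (0, 2 pi]; equal directions give 2 pi (full turn).\<close>
definition ccw_angle :: "complex \<Rightarrow> complex \<Rightarrow> complex \<Rightarrow> real" where
  "ccw_angle p a b = (let \<theta> = Arg ((b - p) / (a - p)) in if \<theta> \<le> 0 then \<theta> + 2 * pi else \<theta>)"

definition in_circumdisk :: "complex \<Rightarrow> complex \<Rightarrow> complex \<Rightarrow> complex \<Rightarrow> bool" where
  "in_circumdisk a b c q \<longleftrightarrow>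
     (\<exists>z. dist z a = dist z b \<and> dist z b = dist z c \<and> dist z q < dist z a)"

end

theory Submission imports Defs begin

(*
  A circle through p is determined by the offset c
  of its centre p + c, and a point w \<noteq> p lies inside it iff Re (cnj c * \<iota>(w - p)) > 1/2,
  on it iff this quantity equals 1/2, where \<iota> x = x / |x|^2 is inversion in the unit circle
  (inversion about p turns circles through p into lines).  Hence "some circle through p and x
  has no point of W inside" means that x maximises a linear functional over the inverted
  point set \<iota>(W - p) with positive value: DT-neighbours of p and DG^- neighbours of p are
  exactly the points exposed by such functionals.

  The reflex case
  (angle \<ge> pi) uses a functional positive exactly on an open half-plane of directions that
  contains q but no direction outside the sector; the convex case compares the supporting
  functionals with the one of the circle through p, wi, wj.
*)

section \<open>Circles through a fixed point as linear functionals\<close>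

definition invert :: "complex \<Rightarrow> complex" where
  "invert x = x / of_real ((cmod x)^2)"

text \<open>For the circle through p with centre p + c, the value of the linear functional given by
  c at the inverted image of w; the circle passes through w iff this value is 1/2.\<close>
definition inv_height :: "complex \<Rightarrow> complex \<Rightarrow> complex \<Rightarrow> real" where
  "inv_height p c w = Re (cnj c * (w - p)) / (cmod (w - p))^2"

text \<open>The circle through p centred at p + c passes through x and has no point of W inside.\<close>
definition supporting :: "complex \<Rightarrow> complex set \<Rightarrow> complex \<Rightarrow> complex \<Rightarrow> bool" where
  "supporting p W x c \<longleftrightarrow> inv_height p c x = 1/2 \<and> (\<forall>w\<in>W - {p}. inv_height p c w \<le> 1/2)"

lemma inv_height_invert: "inv_height p c w = Re (cnj c * invert (w - p))"
  unfolding inv_height_def invert_def by (simp add: Re_divide_of_real mult.assoc[symmetric])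

lemma inv_height_scale: "inv_height p (k / of_real t) w = inv_height p k w / t"
  unfolding inv_height_def by (simp add: Re_divide_of_real)

lemma circle_power:
  assumes "w \<noteq> p"
  shows "(dist (p + c) w)^2 - (cmod c)^2 = (cmod (w - p))^2 * (1 - 2 * inv_height p c w)"
proof -
  have "(dist (p + c) w)^2 = (cmod (w - p))^2 - 2 * Re (cnj c * (w - p)) + (cmod c)^2"
    unfolding dist_norm cmod_power2 by (simp add: power2_eq_square algebra_simps)
  moreover have "(cmod (w - p))^2 * inv_height p c w = Re (cnj c * (w - p))"
    using assms unfolding inv_height_def by simp
  ultimately show ?thesis by (simp add: right_diff_distrib)
qed

lemma inside_circle_iff:
  assumes "w \<noteq> p"
  shows "dist (p + c) w < cmod c \<longleftrightarrow> 1/2 < inv_height p c w"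
proof -
  have "dist (p + c) w < cmod c \<longleftrightarrow> (dist (p + c) w)^2 - (cmod c)^2 < 0"
    using power_mono_iff[of "cmod c" "dist (p + c) w" "2::nat"] by (auto simp: not_le[symmetric])
  also have "\<dots> \<longleftrightarrow> 1 - 2 * inv_height p c w < 0"
    unfolding circle_power[OF assms] using assms by (simp add: mult_less_0_iff)
  finally show ?thesis by auto
qed

lemma on_circle_iff:
  assumes "w \<noteq> p"
  shows "dist (p + c) w = cmod c \<longleftrightarrow> inv_height p c w = 1/2"
proof -
  have "dist (p + c) w = cmod c \<longleftrightarrow> (dist (p + c) w)^2 - (cmod c)^2 = 0"
    by (simp add: power2_eq_iff_nonneg)
  also have "\<dots> \<longleftrightarrow> 1 - 2 * inv_height p c w = 0"
    unfolding circle_power[OF assms] using assms by simp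
  finally show ?thesis by auto
qed

lemma empty_circle_supporting:
  assumes "dist z p = r" "dist z x = r" "ball z r \<inter> W = {}" "x \<noteq> p"
  shows "supporting p W x (z - p)"
proof -
  have r: "r = cmod (z - p)" using assms(1) by (simp add: dist_norm norm_minus_commute)
  have "inv_height p (z - p) x = 1/2"
    using assms(2) on_circle_iff[OF assms(4), of "z - p"] r by simp
  moreover have "inv_height p (z - p) w \<le> 1/2" if "w \<in> W - {p}" for w
  proof (rule ccontr)
    assume "\<not> ?thesis"
    hence "dist (p + (z - p)) w < cmod (z - p)" using inside_circle_iff[of w p "z - p"] that by auto
    hence "w \<in> ball z r \<inter> W" using that r by (simp add: dist_norm)
    with assms(3) show False by blast
  qed
  ultimately show ?thesis unfolding supporting_def by blast
qed

text \<open>Conversely, a point where some functional attains a positive maximum over W - {p}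
  lies on an empty circle through p: rescale the functional so the maximum becomes 1/2.\<close>
lemma empty_circle_of_max:
  assumes "x \<noteq> p" "0 < inv_height p k x" "\<forall>w\<in>W - {p}. inv_height p k w \<le> inv_height p k x"
  shows "\<exists>z r. dist z p = r \<and> dist z x = r \<and> ball z r \<inter> (W \<union> {p}) = {}"
proof -
  define c where "c = k / of_real (2 * inv_height p k x)"
  have hc: "inv_height p c w = inv_height p k w / (2 * inv_height p k x)" for w
    unfolding c_def inv_height_scale ..
  have "dist (p + c) p = cmod c" by (simp add: dist_norm)
  moreover have "dist (p + c) x = cmod c" using assms(1,2) by (simp add: on_circle_iff hc)
  moreover have "ball (p + c) (cmod c) \<inter> (W \<union> {p}) = {}"
  proof (rule ccontr)
    assume "\<not> ?thesis"
    then obtain w where "w \<in> ball (p + c) (cmod c) \<inter> (W \<union> {p})" by blast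
    hence w: "w \<in> W \<union> {p}" "dist (p + c) w < cmod c" by auto
    have "w \<noteq> p" using w(2) by (auto simp: dist_norm)
    hence "1/2 < inv_height p c w" using w(2) inside_circle_iff by blast
    hence "inv_height p k x < inv_height p k w" using assms(2) unfolding hc by (simp add: field_simps)
    moreover have "w \<in> W - {p}" using w(1) \<open>w \<noteq> p\<close> by auto
    ultimately show False using assms(3) by (meson not_le)
  qed
  ultimately show ?thesis by blast
qed

lemma exists_max_height:
  assumes "finite W" "W - {p} \<noteq> {}"
  obtains u where "u \<in> W - {p}" "\<forall>w\<in>W - {p}. inv_height p k w \<le> inv_height p k u"
proof -
  let ?S = "inv_height p k ` (W - {p})"
  have "finite ?S" "?S \<noteq> {}" using assms by auto
  hence "Max ?S \<in> ?S" by (rule Max_in)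
  then obtain u where u: "u \<in> W - {p}" "inv_height p k u = Max ?S" by (metis imageE)
  show thesis using that[OF u(1)] u(2) \<open>finite ?S\<close> by auto
qed

lemma DT_adj_supporting:
  assumes "DT_adj (W \<union> {p}) p w"
  shows "w \<in> W" "w \<noteq> p" "\<exists>c. supporting p W w c"
proof -
  from assms obtain z r where zr: "dist z p = r" "dist z w = r" "ball z r \<inter> (W \<union> {p}) = {}"
    and w: "w \<in> W \<union> {p}" "p \<noteq> w" unfolding DT_adj_def by blast
  show "w \<in> W" "w \<noteq> p" using w by auto
  have "ball z r \<inter> W = {}" using zr(3) by blast
  with zr(1,2) w show "\<exists>c. supporting p W w c" by (metis empty_circle_supporting)
qed

lemma DGminus_adj_supporting:
  assumes "DGminus_adj P W p q"
  shows "\<exists>c. supporting p W q c"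
  using assms unfolding DGminus_adj_def by (metis empty_circle_supporting)

lemma DT_adj_of_max:
  assumes "u \<in> W - {p}" "\<forall>w\<in>W - {p}. inv_height p k w \<le> inv_height p k u" "0 < inv_height p k u"
  shows "DT_adj (W \<union> {p}) p u"
  using empty_circle_of_max[of u p k W] assms unfolding DT_adj_def by auto

lemma DGminus_adj_of_max:
  assumes "p \<in> P" "q \<in> P" "q \<noteq> p" "0 < inv_height p k q"
    and "\<forall>w\<in>W - {p}. inv_height p k w \<le> inv_height p k q"
  shows "DGminus_adj P W p q"
  using empty_circle_of_max[of q p k W] assms unfolding DGminus_adj_def by blast

text \<open>A nonnegative upper bound on a functional that holds at all DT-neighbours of p holds on
  all of W - {p}: a maximiser exceeding it would itself be a DT-neighbour.\<close>
lemma height_bound_from_DT_neighbours: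
  assumes "finite W" "W - {p} \<noteq> {}" "0 \<le> t"
    and bound: "\<And>u. DT_adj (W \<union> {p}) p u \<Longrightarrow> inv_height p k u \<le> t"
  shows "\<forall>w\<in>W - {p}. inv_height p k w \<le> t"
proof -
  obtain u where u: "u \<in> W - {p}" "\<forall>w\<in>W - {p}. inv_height p k w \<le> inv_height p k u"
    using exists_max_height[OF assms(1,2)] by blast
  have "inv_height p k u \<le> t"
  proof (rule ccontr)
    assume "\<not> ?thesis"
    hence "DT_adj (W \<union> {p}) p u" using DT_adj_of_max[OF u] assms(3) by simp
    with bound \<open>\<not> ?thesis\<close> show False by blast
  qed
  thus ?thesis using u(2) by force
qed

section \<open>Angles and cross products\<close>

text \<open>Cross product (signed double area); positive iff y is counterclockwise from x.\<close>
definition cross :: "complex \<Rightarrow> complex \<Rightarrow> real" where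
  "cross x y = Im (cnj x * y)"

lemma ccw_polar:
  assumes "u \<noteq> p" "wi \<noteq> p"
  shows "(u - p) / (wi - p) = of_real (cmod ((u - p) / (wi - p))) * cis (ccw_angle p wi u)"
    and "0 < ccw_angle p wi u" "ccw_angle p wi u \<le> 2 * pi"
proof -
  let ?z = "(u - p) / (wi - p)"
  have z: "?z = of_real (cmod ?z) * cis (Arg ?z)"
    using rcis_cmod_Arg[of ?z] by (simp add: rcis_def)
  have "cis (Arg ?z + 2 * pi) = cis (Arg ?z)"
    by (simp add: complex_eq_iff)
  with z show "?z = of_real (cmod ?z) * cis (ccw_angle p wi u)"
    unfolding ccw_angle_def Let_def by (cases "Arg ?z \<le> 0") auto
  show "0 < ccw_angle p wi u" "ccw_angle p wi u \<le> 2 * pi"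
    using Arg_bounded[of ?z] unfolding ccw_angle_def Let_def by auto
qed

lemma ccw_angle_self: "wi \<noteq> p \<Longrightarrow> ccw_angle p wi wi = 2 * pi"
  unfolding ccw_angle_def by simp

lemma cross_polar:
  assumes "A \<noteq> 0" "x / A = of_real \<rho> * cis \<phi>" "y / A = of_real \<sigma> * cis \<psi>"
  shows "cross x y = (cmod A)^2 * \<rho> * \<sigma> * sin (\<psi> - \<phi>)"
proof -
  have x: "x = A * (of_real \<rho> * cis \<phi>)" and y: "y = A * (of_real \<sigma> * cis \<psi>)"
    using assms by (simp_all add: field_simps)
  show ?thesis unfolding cross_def x y cmod_power2 by (simp add: sin_diff algebra_simps power2_eq_square)
qed

lemma cross_angles:
  assumes "wi \<noteq> p" "u \<noteq> p" "v \<noteq> p"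
  obtains K where "0 < K" "cross (u - p) (v - p) = K * sin (ccw_angle p wi v - ccw_angle p wi u)"
proof -
  have "wi - p \<noteq> 0" using assms by simp
  from cross_polar[OF this ccw_polar(1)[OF assms(2,1)] ccw_polar(1)[OF assms(3,1)]] assms
  show thesis by (intro that[of "(cmod (wi - p))^2 * cmod ((u - p) / (wi - p)) * cmod ((v - p) / (wi - p))"]) auto
qed

lemma cross_from_wi:
  assumes "wi \<noteq> p" "u \<noteq> p"
  obtains K where "0 < K" "cross (wi - p) (u - p) = K * sin (ccw_angle p wi u)"
proof -
  have "ccw_angle p wi wi = 2 * pi" using ccw_angle_self[OF assms(1)] .
  moreover obtain K where "0 < K" "cross (wi - p) (u - p) = K * sin (ccw_angle p wi u - ccw_angle p wi wi)"
    using cross_angles[OF assms(1,1,2)] by blast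
  ultimately show thesis using that by (simp add: sin_diff)
qed

lemma in_sector_iff_sin:
  assumes "0 < \<theta>" "\<theta> < pi" "0 < \<phi>" "\<phi> \<le> 2 * pi"
  shows "\<phi> < \<theta> \<longleftrightarrow> (0 < sin \<phi> \<and> 0 < sin (\<theta> - \<phi>))"
proof
  assume "\<phi> < \<theta>" thus "0 < sin \<phi> \<and> 0 < sin (\<theta> - \<phi>)"
    using assms by (auto intro!: sin_gt_zero)
next
  assume h: "0 < sin \<phi> \<and> 0 < sin (\<theta> - \<phi>)"
  have "\<phi> < pi"
  proof (rule ccontr)
    assume "\<not> \<phi> < pi"
    hence "sin \<phi> \<le> 0"
      using sin_le_zero[of \<phi>] assms(4) by (cases "\<phi> = 2 * pi") auto
    with h show False by simp
  qed
  show "\<phi> < \<theta>"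
  proof (rule ccontr)
    assume "\<not> \<phi> < \<theta>"
    hence "0 \<le> sin (\<phi> - \<theta>)" using \<open>\<phi> < pi\<close> assms by (intro sin_ge_zero) auto
    moreover have "sin (\<theta> - \<phi>) = - sin (\<phi> - \<theta>)" by (metis minus_diff_eq sin_minus)
    ultimately show False using h by simp
  qed
qed

lemma in_sector_iff_cross:
  assumes "wi \<noteq> p" "u \<noteq> p" "wj \<noteq> p" "ccw_angle p wi wj < pi"
  shows "ccw_angle p wi u < ccw_angle p wi wj \<longleftrightarrow>
    (0 < cross (wi - p) (u - p) \<and> 0 < cross (u - p) (wj - p))"
proof -
  obtain K where K: "0 < K" "cross (wi - p) (u - p) = K * sin (ccw_angle p wi u)"
    using cross_from_wi[OF assms(1,2)] .
  obtain L where L: "0 < L"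
    "cross (u - p) (wj - p) = L * sin (ccw_angle p wi wj - ccw_angle p wi u)"
    using cross_angles[OF assms(1,2,3)] .
  show ?thesis
    using in_sector_iff_sin[OF ccw_polar(2)[OF assms(3,1)] assms(4) ccw_polar(2,3)[OF assms(2,1)]]
    unfolding K(2) L(2) using K(1) L(1) by (simp add: zero_less_mult_iff)
qed

lemma cross_pos_of_convex_angle:
  assumes "wi \<noteq> p" "wj \<noteq> p" "ccw_angle p wi wj < pi"
  shows "0 < cross (wi - p) (wj - p)"
proof -
  obtain K where K: "0 < K" "cross (wi - p) (wj - p) = K * sin (ccw_angle p wi wj)"
    using cross_from_wi[OF assms(1,2)] .
  have "0 < sin (ccw_angle p wi wj)" using ccw_polar(2)[OF assms(2,1)] assms(3) by (intro sin_gt_zero)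
  thus ?thesis using K by simp
qed

lemma cross_invert: "cross (invert x) (invert y) = cross x y / ((cmod x)^2 * (cmod y)^2)"
  unfolding cross_def invert_def by (simp add: Im_divide_of_real field_simps)

lemma cramer:
  assumes "cross a b \<noteq> 0"
  shows "x = of_real (cross x b / cross a b) * a + of_real (cross a x / cross a b) * b"
proof -
  have "of_real (cross a b) * x = of_real (cross x b) * a + of_real (cross a x) * b"
    unfolding cross_def by (simp add: complex_eq_iff algebra_simps)
  hence "x = (of_real (cross x b) * a + of_real (cross a x) * b) / of_real (cross a b)"
    using assms by (metis nonzero_mult_div_cancel_left of_real_eq_0_iff)
  thus ?thesis by (simp add: add_divide_distrib of_real_divide)
qed

lemma sector_coordinates:
  assumes "u \<noteq> p" "wi \<noteq> p" "wj \<noteq> p" "ccw_angle p wi wj < pi"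
  obtains \<alpha> \<beta> where "\<And>c. inv_height p c u = \<alpha> * inv_height p c wi + \<beta> * inv_height p c wj"
    and "ccw_angle p wi u < ccw_angle p wi wj \<longleftrightarrow> 0 < \<alpha> \<and> 0 < \<beta>"
proof -
  let ?a = "invert (wi - p)" and ?b = "invert (wj - p)" and ?x = "invert (u - p)"
  have norms: "0 < (cmod (u - p))^2" "0 < (cmod (wi - p))^2" "0 < (cmod (wj - p))^2"
    using assms by auto
  have D: "0 < cross ?a ?b"
    unfolding cross_invert using cross_pos_of_convex_angle[OF assms(2-4)] norms by simp
  define \<alpha> where "\<alpha> = cross ?x ?b / cross ?a ?b"
  define \<beta> where "\<beta> = cross ?a ?x / cross ?a ?b"
  have x: "?x = of_real \<alpha> * ?a + of_real \<beta> * ?b"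
    unfolding \<alpha>_def \<beta>_def using D by (intro cramer) simp
  have "inv_height p c u = \<alpha> * inv_height p c wi + \<beta> * inv_height p c wj" for c
    unfolding inv_height_invert x by (simp add: algebra_simps)
  moreover have "0 < \<alpha> \<longleftrightarrow> 0 < cross (u - p) (wj - p)"
  proof -
    have "0 < \<alpha> \<longleftrightarrow> 0 < cross ?x ?b" unfolding \<alpha>_def using D by (simp add: zero_less_divide_iff)
    also have "\<dots> \<longleftrightarrow> 0 < cross (u - p) (wj - p)"
      unfolding cross_invert using norms by (simp add: pos_less_divide_eq mult_pos_pos)
    finally show ?thesis .
  qed
  moreover have "0 < \<beta> \<longleftrightarrow> 0 < cross (wi - p) (u - p)"
  proof -
    have "0 < \<beta> \<longleftrightarrow> 0 < cross ?a ?x" unfolding \<beta>_def using D by (simp add: zero_less_divide_iff)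
    also have "\<dots> \<longleftrightarrow> 0 < cross (wi - p) (u - p)"
      unfolding cross_invert using norms by (simp add: pos_less_divide_eq mult_pos_pos)
    finally show ?thesis .
  qed
  ultimately show thesis using that in_sector_iff_cross[OF assms(2,1,3,4)] by blast
qed

lemma circle_through_pair:
  assumes "wi \<noteq> p" "wj \<noteq> p" "ccw_angle p wi wj < pi"
  obtains c where "inv_height p c wi = 1/2" "inv_height p c wj = 1/2"
proof -
  let ?a = "invert (wi - p)" and ?b = "invert (wj - p)"
  have D: "0 < cross ?a ?b"
    unfolding cross_invert using cross_pos_of_convex_angle[OF assms] assms by simp
  define c where "c = \<i> * (?a - ?b) / of_real (2 * cross ?a ?b)"
  have "Re (cnj c * y) = Re (- \<i> * cnj (?a - ?b) * y) / (2 * cross ?a ?b)" for y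
  proof -
    have "cnj c * y = (- \<i> * cnj (?a - ?b) * y) / of_real (2 * cross ?a ?b)"
      unfolding c_def by simp
    thus ?thesis by (simp only: Re_divide_of_real)
  qed
  moreover have "Re (- \<i> * cnj (?a - ?b) * ?a) = cross ?a ?b" "Re (- \<i> * cnj (?a - ?b) * ?b) = cross ?a ?b"
    unfolding cross_def by (simp_all add: algebra_simps)
  ultimately show thesis using that[of c] D unfolding inv_height_invert by simp
qed

section \<open>The reflex case\<close>

lemma height_towards_direction:
  assumes "u \<noteq> p" "wi \<noteq> p"
  obtains K where "0 < K" "inv_height p (- \<i> * ((wi - p) * cis \<psi>)) u = K * sin (\<psi> - ccw_angle p wi u)"
proof -
  let ?A = "wi - p"
  have A0: "?A \<noteq> 0" using assms by simp
  have "(?A * cis \<psi>) / ?A = of_real 1 * cis \<psi>" using A0 by simp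
  from cross_polar[OF A0 ccw_polar(1)[OF assms] this]
  have "cross (u - p) (?A * cis \<psi>) = (cmod ?A)^2 * cmod ((u - p) / ?A) * sin (\<psi> - ccw_angle p wi u)"
    by simp
  moreover have "inv_height p (- \<i> * (?A * cis \<psi>)) u = cross (u - p) (?A * cis \<psi>) / (cmod (u - p))^2"
    unfolding inv_height_def cross_def by (simp add: algebra_simps)
  ultimately show thesis
    using assms by (intro that[of "(cmod ?A)^2 * cmod ((u - p) / ?A) / (cmod (u - p))^2"]) auto
qed

text \<open>If the empty sector after wi has opening at least pi, every q inside it is a DG^- neighbour:
  the functional pointing in a direction \<psi> \<in> [pi, \<theta>] beyond q is positive at q, and any
  positive maximiser over W would be a DT-neighbour inside the sector.\<close>
lemma reflex_sector_adjacent: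
  assumes "finite W" "W - {p} \<noteq> {}" "p \<in> P" "q \<in> P" "q \<noteq> p" "wi \<noteq> p" "wj \<noteq> p"
    and empty: "\<forall>w. DT_adj (W \<union> {p}) p w \<longrightarrow> \<not> ccw_angle p wi w < ccw_angle p wi wj"
    and q: "ccw_angle p wi q < ccw_angle p wi wj" and reflex: "pi \<le> ccw_angle p wi wj"
  shows "DGminus_adj P W p q"
proof -
  define \<theta> where "\<theta> = ccw_angle p wi wj"
  define \<psi> where "\<psi> = max pi ((ccw_angle p wi q + \<theta>) / 2)"
  define k where "k = - \<i> * ((wi - p) * cis \<psi>)"
  have bounds: "pi \<le> \<psi>" "\<psi> \<le> \<theta>" "ccw_angle p wi q < \<psi>" "\<psi> - ccw_angle p wi q < pi"
    using q reflex ccw_polar(3)[OF assms(7,6)] ccw_polar(2)[OF assms(5,6)]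
    unfolding \<psi>_def \<theta>_def by (auto simp: max_def)
  have pos_q: "0 < inv_height p k q"
  proof -
    obtain K where "0 < K" "inv_height p k q = K * sin (\<psi> - ccw_angle p wi q)"
      using height_towards_direction[OF assms(5,6)] unfolding k_def .
    moreover have "0 < sin (\<psi> - ccw_angle p wi q)" using bounds by (intro sin_gt_zero) auto
    ultimately show ?thesis by simp
  qed
  have nonpos_outside: "inv_height p k u \<le> 0" if u: "u \<noteq> p" and beyond: "\<theta> \<le> ccw_angle p wi u" for u
  proof -
    obtain K where K: "0 < K" "inv_height p k u = K * sin (\<psi> - ccw_angle p wi u)"
      using height_towards_direction[OF u assms(6)] unfolding k_def .
    have "0 \<le> sin (ccw_angle p wi u - \<psi>)"
      using bounds beyond ccw_polar(3)[OF u assms(6)] by (intro sin_ge_zero) auto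
    moreover have "sin (\<psi> - ccw_angle p wi u) = - sin (ccw_angle p wi u - \<psi>)"
      by (metis minus_diff_eq sin_minus)
    ultimately show ?thesis using K by (simp add: mult_nonneg_nonpos)
  qed
  have "inv_height p k u \<le> 0" if "DT_adj (W \<union> {p}) p u" for u
    using that empty nonpos_outside DT_adj_supporting(2) unfolding \<theta>_def by force
  hence "\<forall>w\<in>W - {p}. inv_height p k w \<le> 0"
    by (intro height_bound_from_DT_neighbours[OF assms(1,2)]) auto
  hence "\<forall>w\<in>W - {p}. inv_height p k w \<le> inv_height p k q" using pos_q by force
  thus ?thesis using DGminus_adj_of_max[OF assms(3,4,5) pos_q] by simp
qed

section \<open>The convex case\<close>

text \<open>If q lies strictly inside a convex sector between two points wi, wj of W, any circle
  through p and q without points of W inside forces q into the circle through p, wi, wj;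
  the inequality is strict because no four points are concyclic.\<close>
lemma convex_sector_adj_imp_in_circumdisk:
  assumes gp: "gen_pos (P \<union> W)" and "p \<in> P" "q \<in> P" "q \<noteq> p"
    and "wi \<in> W" "wj \<in> W" "wi \<noteq> p" "wj \<noteq> p"
    and convex: "ccw_angle p wi wj < pi" and q: "ccw_angle p wi q < ccw_angle p wi wj"
    and "DGminus_adj P W p q"
  shows "in_circumdisk p wi wj q"
proof -
  obtain g where g: "supporting p W q g" using DGminus_adj_supporting assms(11) by blast
  obtain c where c: "inv_height p c wi = 1/2" "inv_height p c wj = 1/2"
    using circle_through_pair[OF assms(7,8) convex] .
  obtain \<alpha> \<beta> where ab: "\<And>c. inv_height p c q = \<alpha> * inv_height p c wi + \<beta> * inv_height p c wj"
    and pos: "0 < \<alpha>" "0 < \<beta>"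
    using sector_coordinates[OF assms(4,7,8) convex] q by metis
  have "inv_height p g wi \<le> 1/2" "inv_height p g wj \<le> 1/2"
    using g assms(5-8) unfolding supporting_def by auto
  hence "inv_height p g q \<le> \<alpha> * (1/2) + \<beta> * (1/2)"
    unfolding ab using pos by (intro add_mono mult_left_mono) auto
  also have "\<dots> = inv_height p c q" unfolding ab c ..
  finally have ge: "1/2 \<le> inv_height p c q" using g unfolding supporting_def by simp
  have circ: "dist (p + c) p = cmod c" "dist (p + c) wi = cmod c" "dist (p + c) wj = cmod c"
    using on_circle_iff[OF assms(7)] on_circle_iff[OF assms(8)] c by (auto simp: dist_norm)
  have "inv_height p c q \<noteq> 1/2"
  proof
    assume "inv_height p c q = 1/2"
    hence "concyclic4 p wi wj q"
      unfolding concyclic4_def using circ on_circle_iff[OF assms(4)] by metis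
    moreover have "distinct [p, wi, wj, q]"
      using assms(4,7,8) q convex ccw_angle_self[OF assms(7)] ccw_polar(3)[OF assms(8,7)] by auto
    ultimately show False using gp assms(2,3,5,6) unfolding gen_pos_def by blast
  qed
  hence "dist (p + c) q < cmod c" using ge inside_circle_iff[OF assms(4)] by auto
  thus ?thesis unfolding in_circumdisk_def using circ by metis
qed

text \<open>It suffices to check DT-neighbours u; such u lies outside the
  sector, so one of its coordinates is nonpositive, and if u were above 1/2 the supporting
  circle at wj or at wi would contain it.\<close>
lemma convex_sector_circle_empty:
  assumes "finite W" "W - {p} \<noteq> {}" "wi \<in> W" "wj \<in> W" "wi \<noteq> p" "wj \<noteq> p"
    and empty: "\<forall>w. DT_adj (W \<union> {p}) p w \<longrightarrow> \<not> ccw_angle p wi w < ccw_angle p wi wj"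
    and convex: "ccw_angle p wi wj < pi"
    and si: "supporting p W wi ci" and sj: "supporting p W wj cj"
    and c: "inv_height p c wi = 1/2" "inv_height p c wj = 1/2"
  shows "\<forall>w\<in>W - {p}. inv_height p c w \<le> 1/2"
proof (rule height_bound_from_DT_neighbours[OF assms(1,2)])
  fix u assume "DT_adj (W \<union> {p}) p u"
  note u = DT_adj_supporting(1,2)[OF this] and outside = empty[rule_format, OF this]
  show "inv_height p c u \<le> 1/2"
  proof (rule ccontr)
    assume gt: "\<not> ?thesis"
    obtain \<alpha> \<beta> where ab: "\<And>c. inv_height p c u = \<alpha> * inv_height p c wi + \<beta> * inv_height p c wj"
      and sector: "ccw_angle p wi u < ccw_angle p wi wj \<longleftrightarrow> 0 < \<alpha> \<and> 0 < \<beta>"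
      using sector_coordinates[of u p wi wj] u assms(5,6) convex by blast
    have sum: "1 < \<alpha> + \<beta>" using gt ab[of c] c by simp
    have half: "inv_height p cj wi \<le> 1/2" "inv_height p ci wj \<le> 1/2"
      "inv_height p ci wi = 1/2" "inv_height p cj wj = 1/2"
      using si sj assms(3-6) unfolding supporting_def by auto
    from outside sector have "\<alpha> \<le> 0 \<or> \<beta> \<le> 0" by auto
    hence "1/2 < inv_height p cj u \<or> 1/2 < inv_height p ci u"
    proof
      assume "\<alpha> \<le> 0"
      hence "\<alpha> * (1/2) \<le> \<alpha> * inv_height p cj wi" using half by (intro mult_left_mono_neg) auto
      thus ?thesis using sum ab[of cj] half by simp
    next
      assume "\<beta> \<le> 0"
      hence "\<beta> * (1/2) \<le> \<beta> * inv_height p ci wj" using half by (intro mult_left_mono_neg) auto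
      thus ?thesis using sum ab[of ci] half by simp
    qed
    thus False using si sj u unfolding supporting_def by (meson Diff_iff not_le singletonD)
  qed
qed simp

lemma convex_sector_in_circumdisk_imp_adj:
  assumes "finite W" "W - {p} \<noteq> {}" "p \<in> P" "q \<in> P" "q \<noteq> p"
    and "DT_adj (W \<union> {p}) p wi" "DT_adj (W \<union> {p}) p wj"
    and empty: "\<forall>w. DT_adj (W \<union> {p}) p w \<longrightarrow> \<not> ccw_angle p wi w < ccw_angle p wi wj"
    and convex: "ccw_angle p wi wj < pi" and "in_circumdisk p wi wj q"
  shows "DGminus_adj P W p q"
proof -
  obtain z where z: "dist z p = dist z wi" "dist z wi = dist z wj" "dist z q < dist z p"
    using assms(10) unfolding in_circumdisk_def by blast
  define c where "c = z - p"
  have zc: "z = p + c" "dist z p = cmod c" unfolding c_def by (auto simp: dist_norm norm_minus_commute)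
  note wi = DT_adj_supporting[OF assms(6)] and wj = DT_adj_supporting[OF assms(7)]
  obtain ci cj where "supporting p W wi ci" "supporting p W wj cj" using wi(3) wj(3) by blast
  moreover have "inv_height p c wi = 1/2" "inv_height p c wj = 1/2"
    using on_circle_iff[OF wi(2), of c] on_circle_iff[OF wj(2), of c] z zc by auto
  ultimately have "\<forall>w\<in>W - {p}. inv_height p c w \<le> 1/2"
    using convex_sector_circle_empty[OF assms(1,2) wi(1) wj(1) wi(2) wj(2) empty convex] by blast
  moreover have cq: "1/2 < inv_height p c q" using inside_circle_iff[OF assms(5), of c] z zc by auto
  ultimately have "\<forall>w\<in>W - {p}. inv_height p c w \<le> inv_height p c q" by force
  thus ?thesis using DGminus_adj_of_max[OF assms(3-5), of c] cq by simp
qed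

theorem mainTheorem2:
  fixes P W :: "complex set" and p q wi wj :: complex
  assumes "finite P" and "finite W" and "gen_pos (P \<union> W)"
    and "p \<in> P" and "W - {p} \<noteq> {}"
    and "DT_adj (W \<union> {p}) p wi" and "DT_adj (W \<union> {p}) p wj"
    and "\<forall>w. DT_adj (W \<union> {p}) p w \<longrightarrow> \<not> ccw_angle p wi w < ccw_angle p wi wj"
    and "q \<in> P" and "q \<noteq> p"
    and "ccw_angle p wi q < ccw_angle p wi wj"
  shows "(ccw_angle p wi wj \<ge> pi \<longrightarrow> DGminus_adj P W p q) \<and>
         (ccw_angle p wi wj < pi \<longrightarrow> (DGminus_adj P W p q \<longleftrightarrow> in_circumdisk p wi wj q))"
proof -
  note wi = DT_adj_supporting(1,2)[OF assms(6)] and wj = DT_adj_supporting(1,2)[OF assms(7)]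
  have "pi \<le> ccw_angle p wi wj \<longrightarrow> DGminus_adj P W p q"
    using reflex_sector_adjacent[OF assms(2,5,4,9,10) wi(2) wj(2) assms(8,11)] by blast
  moreover have "DGminus_adj P W p q \<longleftrightarrow> in_circumdisk p wi wj q"
    if convex: "ccw_angle p wi wj < pi"
    using convex_sector_adj_imp_in_circumdisk[OF assms(3,4,9,10) wi(1) wj(1) wi(2) wj(2) convex assms(11)]
      convex_sector_in_circumdisk_imp_adj[OF assms(2,5,4,9,10,6,7,8) convex] by blast
  ultimately show ?thesis by blast
qed

end
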